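(* (1) For every nilpotent $n\times n$ matrix $A$ over $\mathbb{F}$ and every integer $k$ with $0\le k\le n/2$, there exists an $n\times n$ matrix $B$ commuting with $A$ such that $B^2=0$ and $\mathrm{rk}\,B=k$. (2) If $A$ and $B$ are nilpotent $n\times n$ matrices over $\mathbb{F}$, then for each integer $k$ with $0\le k\le n/2$ there exist an $n\times n$ matrix $C$ with $C^2=0$ and $\mathrm{rk}\,C=k$, and an invertible $P\in GL_n(\mathbb{F})$, such that $C$ commutes with $A$ and $PCP^{-1}$ commutes with $B$.
   Context: $\mathbb{F}$ is an algebraically closed field of characteristic $0$. *)

theory Defs
  imports "Jordan_Normal_Form.DL_Rank" "HOL-Computational_Algebra.Polynomial"
begin

definition nilpotent_mat :: "'a :: semiring_1 mat \<Rightarrow> bool" where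
  "nilpotent_mat A \<longleftrightarrow> (\<exists>m. A ^\<^sub>m m = 0\<^sub>m (dim_row A) (dim_col A))"

end

theory Submission
  imports Defs "Jordan_Normal_Form.Jordan_Normal_Form_Existence" "Jordan_Normal_Form.Jordan_Normal_Form_Uniqueness"
begin

(* 1. Rank-nullity, and triangularisation of nilpotent matrices by induction on a kernel
      vector; with the library's conversion of triangular matrices to Jordan normal form this
      shows that a nilpotent matrix is similar to a Jordan matrix with eigenvalue 0.
   2. Block-diagonal matrices can be permuted up to similarity, so a Jordan matrix depends
      (up to similarity) only on the multiset of its blocks.  Consequently a square-zero
      matrix is determined up to similarity by its nullity (its blocks have size 1 or 2).
   3. "A admits commuting square-zero matrices of every rank k \<le> m" is invariant under
      similarity and additive under block-diagonal sums.  A single nilpotent Jordan block of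
      size s admits ranks up to s div 2 (powers of the block); two odd blocks of sizes
      b + 2d and b admit the rank d + b by an explicit matrix.  Pairing odd blocks gives
      every rank up to n div 2 for any nilpotent n \<times> n matrix: this is part (1).
   4. For part (2), take square-zero C commuting with A and D commuting with B of the same
      rank; by step 2 they are similar, D = P C P\<^sup>-\<^sup>1. *)

lemma rank_plus_kernel_dim:
  fixes M :: "'a :: field mat"
  assumes M: "M \<in> carrier_mat n n"
  shows "vec_space.rank n M + kernel.dim n M = n"
proof -
  interpret V: vec_space "TYPE('a)" n .
  interpret K: kernel n n M by (unfold_locales, rule M)
  interpret L: linear_map class_ring V.V V.V "\<lambda>v. M *\<^sub>v v"
  proof (intro_locales)
    show "mod_hom_axioms class_ring V.V V.V (\<lambda>v. M *\<^sub>v v)"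
      unfolding mod_hom_axioms_def LinearCombinations.module_hom_def
      using M by (auto simp: mult_add_distrib_mat_vec mult_mat_vec)
  qed
  have im: "L.im = V.col_space M"
    unfolding L.im_def V.col_space_eq[OF M] using M by auto
  have ker: "L.ker = mat_kernel M"
    unfolding L.ker_def mat_kernel_def using M by auto
  have "vectorspace.dim class_ring (V.vs L.im) + vectorspace.dim class_ring (V.vs L.ker) = V.dim"
    by (rule L.rank_nullity_main(1), simp)
  thus ?thesis unfolding im ker V.dim_is_n V.rank_def V.col_space_def by simp
qed

lemma kernel_dim_zero_mat: "kernel.dim n (0\<^sub>m n n :: 'a :: field mat) = n"
proof -
  have "vec_space.rank n (0\<^sub>m n n :: 'a mat) = 0" by (rule vec_space.rank_0I)
  thus ?thesis using rank_plus_kernel_dim[of "0\<^sub>m n n :: 'a mat" n] by simp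
qed

section \<open>Nilpotent matrices are similar to nilpotent Jordan matrices\<close>

lemma det_pow_mat:
  assumes A: "(A :: 'a :: comm_ring_1 mat) \<in> carrier_mat n n"
  shows "det (A ^\<^sub>m k) = det A ^ k"
proof (induct k)
  case (Suc k)
  have "det (A ^\<^sub>m Suc k) = det (A ^\<^sub>m k) * det A"
    using det_mult[OF pow_carrier_mat[OF A] A] by simp
  thus ?case using Suc by simp
qed (use A in simp)

lemma nilpotent_kernel_vec:
  assumes A: "(A :: 'a :: field mat) \<in> carrier_mat n n" and n: "n > 0"
    and nil: "A ^\<^sub>m m = 0\<^sub>m n n"
  shows "\<exists>v. v \<in> carrier_vec n \<and> v \<noteq> 0\<^sub>v n \<and> A *\<^sub>v v = 0\<^sub>v n"
proof -
  have "det A ^ m = 0" using nil n unfolding det_pow_mat[OF A, symmetric] by simp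
  hence "det A = 0" by simp
  thus ?thesis using det_0_iff_vec_prod_zero_field[OF A] by blast
qed

lemma similar_mat_pow_zero:
  assumes sim: "similar_mat A B" and A: "A \<in> carrier_mat n n" and nil: "A ^\<^sub>m m = 0\<^sub>m n n"
  shows "B ^\<^sub>m m = 0\<^sub>m n n"
proof -
  from sim obtain P Q where wit: "similar_mat_wit A B P Q" unfolding similar_mat_def by blast
  from similar_mat_witD2[OF A wit] have P: "P \<in> carrier_mat n n" and Q: "Q \<in> carrier_mat n n" by auto
  have "B ^\<^sub>m m = Q * A ^\<^sub>m m * P" by (rule similar_mat_wit_pow_id[OF similar_mat_wit_sym[OF wit]])
  thus ?thesis unfolding nil using P Q by simp
qed

text \<open>Every nonzero vector is the first column of an invertible matrix: move a nonzero
  entry to the top by a row swap, then use a lower triangular matrix with that column.\<close>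

lemma invertible_with_first_column:
  assumes v: "(v :: 'a :: field vec) \<in> carrier_vec n" and v0: "v \<noteq> 0\<^sub>v n"
  shows "\<exists>P Q. P \<in> carrier_mat n n \<and> Q \<in> carrier_mat n n \<and> P * Q = 1\<^sub>m n \<and> Q * P = 1\<^sub>m n
     \<and> P *\<^sub>v unit_vec n 0 = v"
proof -
  from v v0 obtain i where i: "i < n" and vi: "v $ i \<noteq> 0" by (metis eq_vecI carrier_vecD index_zero_vec)
  hence n: "n > 0" by auto
  define S where "S = (swaprows_mat n 0 i :: 'a mat)"
  have S: "S \<in> carrier_mat n n" unfolding S_def by simp
  have SS: "S * S = 1\<^sub>m n" unfolding S_def by (rule swaprows_mat_inv[OF n i])
  define w where "w = S *\<^sub>v v"
  have w: "w \<in> carrier_vec n" unfolding w_def using S v by simp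
  have "w $ 0 = (\<Sum>j = 0..<n. (if i = j \<or> j = 0 \<and> i = 0 then 1 else 0) * v $ j)"
    unfolding w_def S_def using v i n
    by (simp add: mult_mat_vec_def row_def scalar_prod_def swaprows_mat_def)
  also have "\<dots> = (\<Sum>j = 0..<n. if j = i then v $ j else 0)"
    by (rule sum.cong, auto)
  finally have w0: "w $ 0 = v $ i" using i by simp
  define R where "R = mat n n (\<lambda>(r,c). if c = 0 then w $ r else if r = c then 1 else (0::'a))"
  have R: "R \<in> carrier_mat n n" unfolding R_def by simp
  have "det R = prod_list (diag_mat R)"
    by (rule det_lower_triangular[OF _ R], auto simp: R_def)
  also have "\<dots> = (\<Prod> r = 0 ..< n. if r = 0 then w $ 0 else 1)"
    unfolding prod_list_diag_prod using R by (intro prod.cong, auto simp: R_def)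
  also have "\<dots> = w $ 0" using n by (simp add: prod.delta')
  finally have "det R \<noteq> 0" using w0 vi by simp
  from det_non_zero_imp_unit[OF R this, unfolded Units_def, of "()"]
  obtain R' where R': "R' \<in> carrier_mat n n" and RR': "R * R' = 1\<^sub>m n" "R' * R = 1\<^sub>m n"
    by (auto simp: ring_mat_def)
  have Re: "R *\<^sub>v unit_vec n 0 = w"
    by (rule eq_vecI, insert w n, auto simp: R_def)
  have "(S * R) * (R' * S) = S * (R * R') * S" "(R' * S) * (S * R) = R' * (S * S) * R"
    using S R R' by (simp_all add: assoc_mult_mat[of _ n n _ n _ n])
  hence "(S * R) * (R' * S) = 1\<^sub>m n" "(R' * S) * (S * R) = 1\<^sub>m n"
    unfolding RR' SS using S R R' RR' SS by simp_all
  moreover have "(S * R) *\<^sub>v unit_vec n 0 = v"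
  proof -
    have "(S * R) *\<^sub>v unit_vec n 0 = S *\<^sub>v (R *\<^sub>v unit_vec n 0)" using S R by simp
    also have "\<dots> = (S * S) *\<^sub>v v" unfolding Re w_def using S v by simp
    finally show ?thesis unfolding SS using v by simp
  qed
  ultimately show ?thesis using S R R' by (intro exI[of _ "S * R"] exI[of _ "R' * S"]) auto
qed

lemma similar_zero_first_column:
  assumes A: "(A :: 'a :: field mat) \<in> carrier_mat n n" and v: "v \<in> carrier_vec n"
    and v0: "v \<noteq> 0\<^sub>v n" and Av: "A *\<^sub>v v = 0\<^sub>v n"
  shows "\<exists>A'. A' \<in> carrier_mat n n \<and> similar_mat A A' \<and> (\<forall>i<n. A' $$ (i, 0) = 0)"
proof -
  from invertible_with_first_column[OF v v0] obtain P Q where P: "P \<in> carrier_mat n n"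
    and Q: "Q \<in> carrier_mat n n" and PQ: "P * Q = 1\<^sub>m n" and QP: "Q * P = 1\<^sub>m n"
    and Pe: "P *\<^sub>v unit_vec n 0 = v" by auto
  define A' where "A' = Q * A * P"
  have A': "A' \<in> carrier_mat n n" unfolding A'_def using P Q A by auto
  have "P * A' * Q = (P * Q) * A * (P * Q)" unfolding A'_def using P Q A
    by (simp add: assoc_mult_mat[of _ n n _ n _ n])
  hence "A = P * A' * Q" unfolding PQ using A by simp
  hence sim: "similar_mat A A'"
    unfolding similar_mat_def using similar_mat_witI[OF PQ QP _ A A' P Q] by blast
  have "A' *\<^sub>v unit_vec n 0 = Q *\<^sub>v (A *\<^sub>v (P *\<^sub>v unit_vec n 0))"
    unfolding A'_def using P Q A by (simp add: assoc_mult_mat_vec[of _ n n _ n])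
  also have "\<dots> = 0\<^sub>v n" unfolding Pe Av using Q by (intro eq_vecI, auto simp: mult_mat_vec_def)
  finally have col0: "A' *\<^sub>v unit_vec n 0 = 0\<^sub>v n" .
  have "A' $$ (i, 0) = 0" if "i < n" for i
    using arg_cong[OF col0, of "\<lambda>x. x $ i"] A' that by simp
  thus ?thesis using A' sim by blast
qed

definition strictly_upper_triangular :: "'a :: zero mat \<Rightarrow> bool" where
  "strictly_upper_triangular T \<longleftrightarrow> (\<forall>i < dim_row T. \<forall>j \<le> i. T $$ (i, j) = 0)"

lemma upper_block_pow:
  assumes A1: "A1 \<in> carrier_mat k k" and B: "B \<in> carrier_mat k l" and D: "D \<in> carrier_mat l l"
  shows "\<exists>X. X \<in> carrier_mat k l \<and>
    (four_block_mat A1 B (0\<^sub>m l k) D) ^\<^sub>m m = four_block_mat (A1 ^\<^sub>m m) X (0\<^sub>m l k) (D ^\<^sub>m m)"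
proof (induct m)
  case 0
  show ?case using A1 D
    by (intro exI[of _ "0\<^sub>m k l"], auto simp: four_block_one_mat[symmetric] simp del: four_block_one_mat)
next
  case (Suc m)
  then obtain X where X: "X \<in> carrier_mat k l" and
    eq: "(four_block_mat A1 B (0\<^sub>m l k) D) ^\<^sub>m m = four_block_mat (A1 ^\<^sub>m m) X (0\<^sub>m l k) (D ^\<^sub>m m)" by blast
  have "(four_block_mat A1 B (0\<^sub>m l k) D) ^\<^sub>m Suc m =
     four_block_mat (A1 ^\<^sub>m m) X (0\<^sub>m l k) (D ^\<^sub>m m) * four_block_mat A1 B (0\<^sub>m l k) D"
    using eq by simp
  also have "\<dots> = four_block_mat (A1 ^\<^sub>m m * A1 + X * 0\<^sub>m l k) (A1 ^\<^sub>m m * B + X * D)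
     (0\<^sub>m l k * A1 + D ^\<^sub>m m * 0\<^sub>m l k) (0\<^sub>m l k * B + D ^\<^sub>m m * D)"
    by (rule mult_four_block_mat, insert A1 B D X, auto)
  also have "\<dots> = four_block_mat (A1 ^\<^sub>m Suc m) (A1 ^\<^sub>m m * B + X * D) (0\<^sub>m l k) (D ^\<^sub>m Suc m)"
  proof -
    have "A1 ^\<^sub>m m * A1 + X * 0\<^sub>m l k = A1 ^\<^sub>m Suc m" using A1 X
      by (simp, intro right_add_zero_mat[of _ k k], auto)
    moreover have "0\<^sub>m l k * A1 + D ^\<^sub>m m * 0\<^sub>m l k = 0\<^sub>m l k" using A1 D by simp
    moreover have "0\<^sub>m l k * B + D ^\<^sub>m m * D = D ^\<^sub>m Suc m" using B D
      by (simp, intro left_add_zero_mat[of _ l l], auto)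
    ultimately show ?thesis by simp
  qed
  finally show ?case using A1 B D X by (intro exI[of _ "A1 ^\<^sub>m m * B + X * D"], auto)
qed

lemma upper_block_pow_zero:
  assumes A1: "A1 \<in> carrier_mat k k" and B: "B \<in> carrier_mat k l" and D: "D \<in> carrier_mat l l"
    and nil: "(four_block_mat A1 B (0\<^sub>m l k) D) ^\<^sub>m m = 0\<^sub>m (k + l) (k + l)"
  shows "D ^\<^sub>m m = 0\<^sub>m l l"
proof -
  from upper_block_pow[OF A1 B D, of m] obtain X where X: "X \<in> carrier_mat k l"
    and pw: "(four_block_mat A1 B (0\<^sub>m l k) D) ^\<^sub>m m = four_block_mat (A1 ^\<^sub>m m) X (0\<^sub>m l k) (D ^\<^sub>m m)"
    by blast
  show ?thesis
  proof (rule eq_matI)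
    fix i j assume i: "i < dim_row (0\<^sub>m l l :: 'a mat)" and j: "j < dim_col (0\<^sub>m l l :: 'a mat)"
    have eq0: "four_block_mat (A1 ^\<^sub>m m) X (0\<^sub>m l k) (D ^\<^sub>m m) = 0\<^sub>m (k + l) (k + l)"
      using pw nil by simp
    have "(D ^\<^sub>m m) $$ (i, j) = four_block_mat (A1 ^\<^sub>m m) X (0\<^sub>m l k) (D ^\<^sub>m m) $$ (k + i, k + j)"
      using i j A1 X D by simp
    thus "(D ^\<^sub>m m) $$ (i, j) = 0\<^sub>m l l $$ (i, j)" unfolding eq0 using i j by simp
  qed (use D in auto)
qed

lemma similar_strictly_upper_block:
  assumes a2: "a2 \<in> carrier_mat 1 n" and a4: "a4 \<in> carrier_mat n n"
    and sim: "similar_mat a4 T'" and T': "T' \<in> carrier_mat n n" and su: "strictly_upper_triangular T'"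
  shows "\<exists>T. T \<in> carrier_mat (Suc n) (Suc n) \<and> strictly_upper_triangular T \<and>
    similar_mat (four_block_mat (0\<^sub>m 1 1) a2 (0\<^sub>m n 1) a4) T"
proof -
  from sim obtain P Q where wit: "similar_mat_wit a4 T' P Q" unfolding similar_mat_def by blast
  from similar_mat_witD2[OF a4 wit] have P: "P \<in> carrier_mat n n" and Q: "Q \<in> carrier_mat n n"
    and PQ: "P * Q = 1\<^sub>m n" by auto
  have w1: "similar_mat_wit (0\<^sub>m 1 1) (0\<^sub>m 1 1) (1\<^sub>m 1) (1\<^sub>m 1 :: 'a mat)"
    by (intro similar_mat_witI, auto)
  have a2eq: "a2 = 1\<^sub>m 1 * (a2 * P) * Q" using a2 P Q PQ
    by (simp add: assoc_mult_mat[of _ 1 n _ n _ n])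
  have "0\<^sub>m n 1 = P * 0\<^sub>m n 1 * 1\<^sub>m 1" using P by simp
  from similar_mat_wit_four_block[OF w1 wit a2eq this _ a4, of 1] a2 P
  have "similar_mat (four_block_mat (0\<^sub>m 1 1) a2 (0\<^sub>m n 1) a4)
      (four_block_mat (0\<^sub>m 1 1) (a2 * P) (0\<^sub>m n 1) T')"
    unfolding similar_mat_def by auto
  moreover have "strictly_upper_triangular (four_block_mat (0\<^sub>m 1 1) (a2 * P) (0\<^sub>m n 1) T')"
    using su T' a2 P unfolding strictly_upper_triangular_def by auto
  ultimately show ?thesis using T' a2 P by (intro exI[of _ "four_block_mat (0\<^sub>m 1 1) (a2 * P) (0\<^sub>m n 1) T'"]) auto
qed

text \<open>Every nilpotent matrix is similar to a strictly upper triangular one (induction on the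
  size, splitting off a kernel vector).\<close>

lemma nilpotent_similar_strictly_upper:
  assumes A: "(A :: 'a :: field mat) \<in> carrier_mat n n" and nil: "A ^\<^sub>m m = 0\<^sub>m n n"
  shows "\<exists>T. T \<in> carrier_mat n n \<and> strictly_upper_triangular T \<and> similar_mat A T"
  using A nil
proof (induct n arbitrary: A)
  case 0
  thus ?case by (intro exI[of _ A], auto intro: similar_mat_refl simp: strictly_upper_triangular_def)
next
  case (Suc n A)
  from nilpotent_kernel_vec[OF Suc(2) _ Suc(3)] obtain v where "v \<in> carrier_vec (Suc n)"
    and "v \<noteq> 0\<^sub>v (Suc n)" and "A *\<^sub>v v = 0\<^sub>v (Suc n)" by auto
  from similar_zero_first_column[OF Suc(2) this] obtain A' where A': "A' \<in> carrier_mat (Suc n) (Suc n)"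
    and simA: "similar_mat A A'" and col0: "\<forall>i < Suc n. A' $$ (i, 0) = 0" by blast
  have nil': "A' ^\<^sub>m m = 0\<^sub>m (Suc n) (Suc n)" by (rule similar_mat_pow_zero[OF simA Suc(2,3)])
  obtain a1 a2 a3 a4 where sb: "split_block A' 1 1 = (a1, a2, a3, a4)" by (cases "split_block A' 1 1")
  have c: "a1 \<in> carrier_mat 1 1" "a2 \<in> carrier_mat 1 n" "a3 \<in> carrier_mat n 1" "a4 \<in> carrier_mat n n"
    and A'eq: "A' = four_block_mat a1 a2 a3 a4" using split_block[OF sb, of n n] A' by auto
  have "a1 = 0\<^sub>m 1 1" "a3 = 0\<^sub>m n 1"
    using sb col0 A' unfolding split_block_def Let_def by (auto intro!: eq_matI)
  note A'eq = A'eq[unfolded this]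
  have "a4 ^\<^sub>m m = 0\<^sub>m n n"
    by (rule upper_block_pow_zero[OF _ c(2,4)], insert nil' A'eq, auto)
  from Suc(1)[OF c(4) this] obtain T' where "T' \<in> carrier_mat n n" "strictly_upper_triangular T'"
    "similar_mat a4 T'" by blast
  from similar_strictly_upper_block[OF c(2,4) this(3,1,2)] obtain T where
    "T \<in> carrier_mat (Suc n) (Suc n)" "strictly_upper_triangular T" "similar_mat A' T"
    unfolding A'eq by blast
  thus ?case using similar_mat_trans[OF simA] by blast
qed

lemma poly_prod_list_root:
  assumes "x \<in> set xs" and "poly (f x) (a :: 'a :: idom) = 0"
  shows "poly (prod_list (map f xs)) a = 0"
  using assms by (induct xs, auto)

text \<open>A nilpotent matrix is similar to a Jordan matrix all of whose eigenvalues are 0: the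
  Jordan form of its strictly upper triangular model has characteristic polynomial x^n.\<close>

lemma nilpotent_jordan:
  assumes A: "(A :: 'a :: field mat) \<in> carrier_mat n n" and nil: "A ^\<^sub>m m = 0\<^sub>m n n"
  shows "\<exists>bs. similar_mat A (jordan_matrix bs) \<and> (\<forall>x \<in> set bs. snd x = 0 \<and> fst x > 0)
     \<and> sum_list (map fst bs) = n"
proof -
  from nilpotent_similar_strictly_upper[OF A nil] obtain T where T: "T \<in> carrier_mat n n"
    and su: "strictly_upper_triangular T" and sim: "similar_mat A T" by blast
  have ut: "upper_triangular T" using T su by (auto simp: upper_triangular_def strictly_upper_triangular_def)
  define bs where "bs = triangular_to_jnf_vector T"
  have jnf: "jordan_nf T bs" unfolding bs_def by (rule triangular_to_jnf_vector[OF T ut])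
  hence bs0: "0 \<notin> fst ` set bs" and simJ: "similar_mat T (jordan_matrix bs)"
    unfolding jordan_nf_def by auto
  have "diag_mat T = replicate n 0" using T su unfolding diag_mat_def strictly_upper_triangular_def
    by (intro nth_equalityI, auto)
  hence cpT: "poly (char_poly T) a = a ^ n" for a
    unfolding char_poly_upper_triangular[OF T ut] by (induct n, auto)
  have ev: "snd x = 0" if x: "x \<in> set bs" for x
  proof -
    obtain s a where xsa: "x = (s,a)" by force
    from x bs0 xsa have "s > 0" by force
    hence "poly (char_poly T) a = 0" unfolding jordan_nf_char_poly[OF jnf]
      by (intro poly_prod_list_root[OF x[unfolded xsa]], auto)
    thus ?thesis using cpT xsa by simp
  qed
  from similar_matD[OF simJ] T have "jordan_matrix bs \<in> carrier_mat n n" by auto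
  hence "sum_list (map fst bs) = n" by auto
  moreover have "\<forall>x \<in> set bs. snd x = 0 \<and> fst x > 0" using ev bs0 by force
  ultimately show ?thesis using similar_mat_trans[OF sim simJ] by blast
qed

section \<open>Block-diagonal matrices up to similarity\<close>

abbreviation block_diag :: "'a :: zero mat \<Rightarrow> 'a mat \<Rightarrow> 'a mat" where
  "block_diag X Y \<equiv> four_block_mat X (0\<^sub>m (dim_row X) (dim_col Y)) (0\<^sub>m (dim_row Y) (dim_col X)) Y"

lemma diag_block_mat_Cons': "diag_block_mat (A # As) = block_diag A (diag_block_mat As)"
  by (simp add: Let_def)

lemma diag_block_mat_append': "diag_block_mat (As @ Bs) = block_diag (diag_block_mat As) (diag_block_mat Bs)"
  by (simp add: diag_block_mat_append Let_def)

lemma jordan_matrix_Cons': "jordan_matrix ((s,e) # bs) = block_diag (jordan_block s e) (jordan_matrix bs)"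
  unfolding jordan_matrix_def diag_block_mat_Cons' by (simp add: Let_def)

lemma block_diag_assoc: "block_diag A (block_diag B C) = block_diag (block_diag A B) C"
  using assoc_four_block_mat[of A B C] by simp

lemma diag_block_square_carrier:
  assumes "\<forall>M \<in> set xs. square_mat M"
  shows "diag_block_mat xs \<in> carrier_mat (sum_list (map dim_row xs)) (sum_list (map dim_row xs))"
proof -
  have "sum_list (map dim_col xs) = sum_list (map dim_row xs)"
    using assms by (induct xs, auto simp: square_mat.simps)
  thus ?thesis unfolding carrier_mat_def by (simp add: dim_diag_block_mat)
qed

lemma similar_block_diag_swap:
  assumes A: "(A :: 'a :: comm_ring_1 mat) \<in> carrier_mat n n" and B: "B \<in> carrier_mat m m"
  shows "similar_mat (block_diag A B) (block_diag B A)"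
proof -
  define P where "P = (four_block_mat (0\<^sub>m n m) (1\<^sub>m n) (1\<^sub>m m) (0\<^sub>m m n) :: 'a mat)"
  define Q where "Q = (four_block_mat (0\<^sub>m m n) (1\<^sub>m m) (1\<^sub>m n) (0\<^sub>m n m) :: 'a mat)"
  have "P \<in> carrier_mat (n+m) (m+n)" "Q \<in> carrier_mat (m+n) (n+m)" unfolding P_def Q_def by simp_all
  hence P: "P \<in> carrier_mat (n+m) (n+m)" and Q: "Q \<in> carrier_mat (n+m) (n+m)"
    by (simp_all only: add.commute[of m n])
  have PQ: "P * Q = 1\<^sub>m (n+m)" unfolding P_def Q_def
    by (subst mult_four_block_mat[OF zero_carrier_mat one_carrier_mat one_carrier_mat zero_carrier_mat
          zero_carrier_mat one_carrier_mat one_carrier_mat zero_carrier_mat], simp_all)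
  have "Q * P = 1\<^sub>m (m+n)" unfolding P_def Q_def
    by (subst mult_four_block_mat[OF zero_carrier_mat one_carrier_mat one_carrier_mat zero_carrier_mat
          zero_carrier_mat one_carrier_mat one_carrier_mat zero_carrier_mat], simp_all)
  hence QP: "Q * P = 1\<^sub>m (n+m)" by (simp only: add.commute[of m n])
  have "P * four_block_mat B (0\<^sub>m m n) (0\<^sub>m n m) A = four_block_mat (0\<^sub>m n m) A B (0\<^sub>m m n)"
    unfolding P_def
    by (subst mult_four_block_mat[OF zero_carrier_mat one_carrier_mat one_carrier_mat zero_carrier_mat
          B zero_carrier_mat zero_carrier_mat A], insert A B, simp_all)
  hence "P * four_block_mat B (0\<^sub>m m n) (0\<^sub>m n m) A * Q = four_block_mat (0\<^sub>m n m) A B (0\<^sub>m m n) * Q"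
    by simp
  also have "\<dots> = four_block_mat A (0\<^sub>m n m) (0\<^sub>m m n) B"
    unfolding Q_def
    by (subst mult_four_block_mat[OF zero_carrier_mat A B zero_carrier_mat
          zero_carrier_mat one_carrier_mat one_carrier_mat zero_carrier_mat], insert A B, simp_all)
  finally have eq: "block_diag A B = P * block_diag B A * Q" using A B by simp
  have "block_diag B A \<in> carrier_mat (m+n) (m+n)" using A B by simp
  hence BA: "block_diag B A \<in> carrier_mat (n+m) (n+m)" by (simp only: add.commute[of m n])
  have AB: "block_diag A B \<in> carrier_mat (n+m) (n+m)" using A B by simp
  show ?thesis by (rule similar_matI[of _ _ P Q "n+m"], insert AB BA P Q PQ QP eq, simp_all)
qed

lemma similar_block_diag_cong:
  assumes "similar_mat (A :: 'a :: comm_ring_1 mat) A'" "similar_mat B B'"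
  shows "similar_mat (block_diag A B) (block_diag A' B')"
proof -
  from similar_matD[OF assms(1)] obtain n where A: "A \<in> carrier_mat n n" and A': "A' \<in> carrier_mat n n" by auto
  from similar_matD[OF assms(2)] obtain m where B: "B \<in> carrier_mat m m" and B': "B' \<in> carrier_mat m m" by auto
  show ?thesis using similar_mat_four_block_0_0[OF assms A B] A B A' B' by simp
qed

lemma similar_diag_block_move:
  assumes sq: "\<forall>M \<in> set (xs @ x # ys). square_mat (M :: 'a :: comm_ring_1 mat)"
  shows "similar_mat (diag_block_mat (xs @ x # ys)) (diag_block_mat (x # xs @ ys))"
proof -
  let ?X = "diag_block_mat xs" let ?Y = "diag_block_mat ys"
  have X: "?X \<in> carrier_mat (sum_list (map dim_row xs)) (sum_list (map dim_row xs))"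
    by (rule diag_block_square_carrier, insert sq, simp)
  have Y: "?Y \<in> carrier_mat (sum_list (map dim_row ys)) (sum_list (map dim_row ys))"
    by (rule diag_block_square_carrier, insert sq, simp)
  have x: "x \<in> carrier_mat (dim_row x) (dim_row x)" using sq unfolding carrier_mat_def by simp
  have "diag_block_mat (xs @ x # ys) = block_diag (block_diag ?X x) ?Y"
    unfolding diag_block_mat_append' diag_block_mat_Cons' block_diag_assoc ..
  moreover have "diag_block_mat (x # xs @ ys) = block_diag (block_diag x ?X) ?Y"
    unfolding diag_block_mat_append' diag_block_mat_Cons' block_diag_assoc ..
  moreover have "similar_mat (block_diag (block_diag ?X x) ?Y) (block_diag (block_diag x ?X) ?Y)"
    by (rule similar_block_diag_cong[OF similar_block_diag_swap[OF X x] similar_mat_refl[OF Y]])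
  ultimately show ?thesis by simp
qed

lemma similar_diag_block_mset:
  assumes "mset As = mset Bs" and "\<forall>M \<in> set As. square_mat (M :: 'a :: comm_ring_1 mat)"
  shows "similar_mat (diag_block_mat As) (diag_block_mat Bs)"
  using assms
proof (induct As arbitrary: Bs)
  case Nil
  thus ?case by (auto intro: similar_mat_refl[of _ 0])
next
  case (Cons a As Bs)
  from Cons(2) have "a \<in> set Bs" by (metis list.set_intros(1) set_mset_mset)
  from split_list[OF this] obtain ys zs where Bs: "Bs = ys @ a # zs" by auto
  have "set Bs = set (a # As)" using mset_eq_setD[OF Cons(2)] by simp
  hence sqB: "\<forall>M \<in> set Bs. square_mat M" using Cons(3) by simp
  have "mset As = mset (ys @ zs)" using Cons(2) unfolding Bs by simp
  hence IH: "similar_mat (diag_block_mat As) (diag_block_mat (ys @ zs))"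
    using Cons(1,3) by simp
  have a: "a \<in> carrier_mat (dim_row a) (dim_row a)" using Cons(3) unfolding carrier_mat_def by simp
  have "similar_mat (diag_block_mat (a # As)) (diag_block_mat (a # ys @ zs))"
    unfolding diag_block_mat_Cons' by (rule similar_block_diag_cong[OF similar_mat_refl[OF a] IH])
  moreover have "similar_mat (diag_block_mat (a # ys @ zs)) (diag_block_mat Bs)"
    unfolding Bs by (rule similar_mat_sym[OF similar_diag_block_move], insert sqB, unfold Bs)
  ultimately show ?case by (rule similar_mat_trans)
qed

lemma similar_jordan_mset:
  assumes "mset bs = mset cs"
  shows "similar_mat (jordan_matrix (bs :: (nat \<times> 'a :: comm_ring_1) list)) (jordan_matrix cs)"
  unfolding jordan_matrix_def
  by (rule similar_diag_block_mset, unfold mset_map assms, auto)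

section \<open>Square-zero matrices are classified by their nullity\<close>

lemma kernel_dim_jordan_pow_0:
  assumes ev: "\<forall>x \<in> set bs. snd x = (0 :: 'a :: field)"
  shows "kernel.dim (sum_list (map fst bs)) (jordan_matrix bs ^\<^sub>m k) = (\<Sum> n \<leftarrow> map fst bs. min k n)"
proof -
  have "filter (\<lambda>(n, e). e = 0) bs = bs" using ev by (induct bs, auto)
  hence "dim_gen_eigenspace (jordan_matrix bs) 0 k = (\<Sum> n \<leftarrow> map fst bs. min k n)"
    unfolding dim_gen_eigenspace_jordan_matrix by simp
  moreover have "char_matrix (jordan_matrix bs) 0 = jordan_matrix bs"
    unfolding char_matrix_def by (intro eq_matI, auto)
  ultimately show ?thesis
    unfolding dim_gen_eigenspace_def kernel_dim_def by (cases k, simp_all add: jordan_matrix_dim)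
qed

text \<open>If truncating at k does not change a sum of naturals, every summand is at most k; applied
  with k = 2 it shows that a square-zero Jordan matrix has blocks of size at most 2.\<close>

lemma sum_list_min_eq:
  assumes "(\<Sum> n \<leftarrow> xs. min (k::nat) n) = sum_list xs"
  shows "\<forall>x \<in> set xs. x \<le> k"
  using assms
proof (induct xs)
  case (Cons a xs)
  have "(\<Sum> n \<leftarrow> xs. min k n) \<le> sum_list xs" by (induct xs, auto)
  with Cons(2) have "min k a = a" "(\<Sum> n \<leftarrow> xs. min k n) = sum_list xs" by auto
  with Cons(1) show ?case by auto
qed simp

lemma mset_two_values:
  assumes "\<forall>x \<in> set bs. x = u \<or> x = v" and "u \<noteq> v"
  shows "mset bs = mset (replicate (length (filter ((=) u) bs)) u @ replicate (length (filter ((=) v) bs)) v)"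
  using assms by (induct bs, auto)

definition square_zero_normal :: "nat \<Rightarrow> nat \<Rightarrow> 'a :: {zero,one} mat" where
  "square_zero_normal n r = jordan_matrix (replicate r (2, 0) @ replicate (n - 2 * r) (1, 0))"

lemma square_zero_similar_normal:
  assumes C: "(C :: 'a :: field mat) \<in> carrier_mat n n" and CC: "C * C = 0\<^sub>m n n"
  shows "similar_mat C (square_zero_normal n (n - kernel.dim n C))"
proof -
  have nil: "C ^\<^sub>m 2 = 0\<^sub>m n n" using C CC by (simp add: numeral_2_eq_2)
  from nilpotent_jordan[OF C nil] obtain bs where sim: "similar_mat C (jordan_matrix bs)"
    and bs: "\<forall>x \<in> set bs. snd x = 0 \<and> fst x > 0" and sn: "sum_list (map fst bs) = n" by blast
  let ?J = "jordan_matrix bs :: 'a mat"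
  have ev: "\<forall>x \<in> set bs. snd x = (0 :: 'a)" using bs by auto
  have "(\<Sum> n \<leftarrow> map fst bs. min 2 n) = kernel.dim n (?J ^\<^sub>m 2)"
    using kernel_dim_jordan_pow_0[OF ev, of 2] sn by simp
  also have "\<dots> = n" unfolding similar_mat_pow_zero[OF sim C nil] by (rule kernel_dim_zero_mat)
  finally have "\<forall>x \<in> set (map fst bs). x \<le> 2" using sum_list_min_eq sn by metis
  hence two: "\<forall>x \<in> set bs. x = (1,0) \<or> x = (2,0)" using bs by force
  from sim obtain P Q where wit: "similar_mat_wit C ?J P Q" unfolding similar_mat_def by blast
  have "?J \<in> carrier_mat n n" using sn by (metis jordan_matrix_carrier)
  hence "kernel.dim n C = kernel.dim n (?J ^\<^sub>m 1)"
    using similar_mat_wit_kernel_dim[OF C wit] by simp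
  also have "\<dots> = (\<Sum> n \<leftarrow> map fst bs. min 1 n)"
    using kernel_dim_jordan_pow_0[OF ev, of 1] sn by simp
  also have "\<dots> = length bs" using bs by (induct bs, auto)
  finally have kd: "kernel.dim n C = length bs" .
  define c1 where "c1 = length (filter ((=) (1::nat, 0::'a)) bs)"
  define c2 where "c2 = length (filter ((=) (2::nat, 0::'a)) bs)"
  have m: "mset bs = mset (replicate c1 (1,0) @ replicate c2 (2,0))"
    unfolding c1_def c2_def by (rule mset_two_values[OF two], simp)
  have "length bs = c1 + c2" using arg_cong[OF m, of size] by simp
  moreover have "n = c1 + 2 * c2"
  proof -
    have "sum_list (map fst bs) = sum_mset (image_mset fst (mset bs))"
      by (metis mset_map sum_mset_sum_list)
    also have "\<dots> = c1 + 2 * c2" unfolding m by simp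
    finally show ?thesis using sn by simp
  qed
  ultimately have r: "n - kernel.dim n C = c2" "n - 2 * c2 = c1" unfolding kd by auto
  have "mset bs = mset (replicate c2 (2,0) @ replicate (n - 2 * c2) (1,0))" unfolding m r by simp
  from similar_mat_trans[OF sim similar_jordan_mset[OF this]] show ?thesis
    unfolding square_zero_normal_def r .
qed

lemma square_zero_similar:
  assumes C: "(C :: 'a :: field mat) \<in> carrier_mat n n" and CC: "C * C = 0\<^sub>m n n"
    and D: "D \<in> carrier_mat n n" and DD: "D * D = 0\<^sub>m n n"
    and eq: "kernel.dim n C = kernel.dim n D"
  shows "similar_mat C D"
  using square_zero_similar_normal[OF C CC] square_zero_similar_normal[OF D DD] eq
  by (metis similar_mat_sym similar_mat_trans)

text \<open>Shifts, their powers and rectangular embeddings are of this form, and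
  products of such matrices are computed by composing the patterns.\<close>

definition pattern_mat :: "nat \<Rightarrow> nat \<Rightarrow> (nat \<Rightarrow> bool) \<Rightarrow> (nat \<Rightarrow> nat) \<Rightarrow> 'a :: zero \<Rightarrow> 'a mat" where
  "pattern_mat nr nc P f x = mat nr nc (\<lambda>(i,j). if P i \<and> j = f i then x else 0)"

lemma pattern_mat_carrier[simp]: "pattern_mat nr nc P f x \<in> carrier_mat nr nc"
  unfolding pattern_mat_def by simp

lemma pattern_mat_dims[simp]:
  "dim_row (pattern_mat nr nc P f x) = nr" "dim_col (pattern_mat nr nc P f x) = nc"
  unfolding pattern_mat_def by auto

lemma pattern_mat_index[simp]:
  "i < nr \<Longrightarrow> j < nc \<Longrightarrow> pattern_mat nr nc P f x $$ (i,j) = (if P i \<and> j = f i then x else 0)"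
  unfolding pattern_mat_def by simp

lemma pattern_mat_mult:
  "pattern_mat nr n P f (x :: 'a :: semiring_1) * pattern_mat n nc Q g y
     = pattern_mat nr nc (\<lambda>i. P i \<and> f i < n \<and> Q (f i)) (\<lambda>i. g (f i)) (x * y)"
proof (rule eq_matI)
  fix i j assume "i < dim_row (pattern_mat nr nc (\<lambda>i. P i \<and> f i < n \<and> Q (f i)) (\<lambda>i. g (f i)) (x * y))"
    and "j < dim_col (pattern_mat nr nc (\<lambda>i. P i \<and> f i < n \<and> Q (f i)) (\<lambda>i. g (f i)) (x * y))"
  hence i: "i < nr" and j: "j < nc" by auto
  have "(pattern_mat nr n P f x * pattern_mat n nc Q g y) $$ (i,j)
      = (\<Sum>k = 0..<n. pattern_mat nr n P f x $$ (i,k) * pattern_mat n nc Q g y $$ (k,j))"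
    using i j by (simp add: scalar_prod_def)
  also have "\<dots> = (\<Sum>k = 0..<n. if k = f i then (if P i then x else 0) * pattern_mat n nc Q g y $$ (k,j) else 0)"
    by (rule sum.cong, insert i j, auto)
  also have "\<dots> = (if P i \<and> f i < n \<and> Q (f i) \<and> j = g (f i) then x * y else 0)"
    using j by (simp add: sum.delta')
  finally show "(pattern_mat nr n P f x * pattern_mat n nc Q g y) $$ (i,j)
      = pattern_mat nr nc (\<lambda>i. P i \<and> f i < n \<and> Q (f i)) (\<lambda>i. g (f i)) (x * y) $$ (i, j)"
    using i j by simp
qed auto

lemma pattern_mat_eqI:
  assumes "\<And>i j. i < nr \<Longrightarrow> j < nc \<Longrightarrow> (P i \<and> j = f i) = (P' i \<and> j = f' i)"
  shows "pattern_mat nr nc P f x = pattern_mat nr nc P' f' x"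
  by (rule eq_matI, insert assms, auto)

lemma pattern_mat_add_cancel:
  assumes "\<And>i j. i < nr \<Longrightarrow> j < nc \<Longrightarrow> (P i \<and> j = f i) = (P' i \<and> j = f' i)"
  shows "pattern_mat nr nc P f (x :: 'a :: group_add) + pattern_mat nr nc P' f' (- x) = 0\<^sub>m nr nc"
    and "pattern_mat nr nc P f (- x :: 'a :: group_add) + pattern_mat nr nc P' f' x = 0\<^sub>m nr nc"
  by (rule eq_matI, insert assms, auto)+

lemma pattern_mat_zero:
  assumes "\<And>i j. i < nr \<Longrightarrow> j < nc \<Longrightarrow> \<not> (P i \<and> j = f i)"
  shows "pattern_mat nr nc P f x = 0\<^sub>m nr nc"
  by (rule eq_matI, insert assms, auto)

definition shift_mat :: "nat \<Rightarrow> nat \<Rightarrow> nat \<Rightarrow> 'a :: zero \<Rightarrow> 'a mat" where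
  "shift_mat nr nc e x = pattern_mat nr nc (\<lambda>_. True) (\<lambda>i. i + e) x"

definition down_shift_mat :: "nat \<Rightarrow> nat \<Rightarrow> nat \<Rightarrow> 'a :: {zero,one} mat" where
  "down_shift_mat nr nc d = pattern_mat nr nc (\<lambda>i. d \<le> i) (\<lambda>i. i - d) 1"

lemma shift_mat_carrier[simp]: "shift_mat nr nc e x \<in> carrier_mat nr nc"
  unfolding shift_mat_def by simp

lemma shift_mat_dims[simp]: "dim_row (shift_mat nr nc e x) = nr" "dim_col (shift_mat nr nc e x) = nc"
  unfolding shift_mat_def by auto

lemma down_shift_mat_carrier[simp]: "down_shift_mat nr nc d \<in> carrier_mat nr nc"
  unfolding down_shift_mat_def by simp

lemma jordan_block_zero_pow_shift: "(jordan_block n (0 :: 'a :: field)) ^\<^sub>m p = shift_mat n n p 1"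
  unfolding jordan_block_zero_pow shift_mat_def pattern_mat_def by (rule eq_matI, auto)

lemma jordan_block_zero_shift: "jordan_block n (0 :: 'a :: field) = shift_mat n n 1 1"
  using jordan_block_zero_pow_shift[of n 1] by simp

lemma shift_mat_mult: "shift_mat n n p 1 * shift_mat n n q 1 = (shift_mat n n (p + q) 1 :: 'a :: semiring_1 mat)"
  unfolding shift_mat_def pattern_mat_mult mult_1 by (rule pattern_mat_eqI, auto)

lemma shift_mat_vanish: "n \<le> p \<Longrightarrow> shift_mat n n p x = 0\<^sub>m n n"
  unfolding shift_mat_def by (rule pattern_mat_zero, auto)

section \<open>Realising all ranks of commuting square-zero matrices\<close>

definition commuting_square_zero_up_to :: "'a :: field mat \<Rightarrow> nat \<Rightarrow> nat \<Rightarrow> bool" where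
  "commuting_square_zero_up_to A n m \<longleftrightarrow> (\<forall>k \<le> m. \<exists>B. B \<in> carrier_mat n n \<and> A * B = B * A
     \<and> B * B = 0\<^sub>m n n \<and> kernel.dim n B = n - k)"

lemma commuting_square_zero_jordan_block:
  "commuting_square_zero_up_to (jordan_block s (0 :: 'a :: field)) s (s div 2)"
  unfolding commuting_square_zero_up_to_def
proof (intro allI impI)
  fix k assume k: "k \<le> s div 2"
  let ?B = "shift_mat s s (s - k) 1 :: 'a mat"
  have "jordan_block s 0 * ?B = ?B * jordan_block s 0"
    unfolding jordan_block_zero_shift shift_mat_mult by (simp add: add.commute)
  moreover have "?B * ?B = 0\<^sub>m s s" unfolding shift_mat_mult using k by (intro shift_mat_vanish, linarith)
  moreover have "kernel.dim s ?B = s - k"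
    using dim_kernel_zero_jordan_block_pow[of s "s - k"] unfolding jordan_block_zero_pow_shift by simp
  ultimately show "\<exists>B. B \<in> carrier_mat s s \<and> jordan_block s (0::'a) * B = B * jordan_block s 0 \<and>
      B * B = 0\<^sub>m s s \<and> kernel.dim s B = s - k" by (intro exI[of _ ?B]) auto
qed

lemma commuting_square_zero_similar:
  assumes sim: "similar_mat A J" and J: "J \<in> carrier_mat n n" and g: "commuting_square_zero_up_to J n m"
  shows "commuting_square_zero_up_to A n m"
  unfolding commuting_square_zero_up_to_def
proof (intro allI impI)
  fix k assume k: "k \<le> m"
  from g k obtain B where B: "B \<in> carrier_mat n n" and JB: "J * B = B * J" and BB: "B * B = 0\<^sub>m n n"
    and kd: "kernel.dim n B = n - k" unfolding commuting_square_zero_up_to_def by blast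
  from sim obtain P Q where wit: "similar_mat_wit A J P Q" unfolding similar_mat_def by blast
  from similar_matD[OF sim] J have A: "A \<in> carrier_mat n n" by auto
  from similar_mat_witD2[OF A wit] have P: "P \<in> carrier_mat n n" and Q: "Q \<in> carrier_mat n n"
    and PQ: "P * Q = 1\<^sub>m n" and QP: "Q * P = 1\<^sub>m n" and AJ: "A = P * J * Q" by auto
  have conj_mult: "P * X * Q * (P * Y * Q) = P * (X * Y) * Q"
    if X: "X \<in> carrier_mat n n" and Y: "Y \<in> carrier_mat n n" for X Y
  proof -
    have "P * X * Q * (P * Y * Q) = P * X * (Q * P) * Y * Q"
      using P Q X Y by (simp add: assoc_mult_mat[of _ n n _ n _ n])
    also have "\<dots> = P * (X * Y) * Q" unfolding QP using P Q X Y by (simp add: assoc_mult_mat[of _ n n _ n _ n])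
    finally show ?thesis .
  qed
  define B' where "B' = P * B * Q"
  have B': "B' \<in> carrier_mat n n" unfolding B'_def using P B Q by auto
  have "A * B' = B' * A" unfolding AJ B'_def conj_mult[OF J B] conj_mult[OF B J] JB ..
  moreover have "B' * B' = 0\<^sub>m n n" unfolding B'_def conj_mult[OF B B] BB using P Q by simp
  moreover have "kernel.dim n B' = n - k"
  proof -
    have "similar_mat_wit B' B P Q" unfolding B'_def by (rule similar_mat_witI[OF PQ QP refl], insert B P Q, auto)
    from similar_mat_wit_kernel_dim[OF B' this] kd show ?thesis by simp
  qed
  ultimately show "\<exists>B. B \<in> carrier_mat n n \<and> A * B = B * A \<and> B * B = 0\<^sub>m n n \<and> kernel.dim n B = n - k"
    using B' by blast
qed

lemma commuting_square_zero_block_diag: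
  assumes X: "X \<in> carrier_mat n1 n1" and Y: "Y \<in> carrier_mat n2 n2"
    and gX: "commuting_square_zero_up_to X n1 m1" and gY: "commuting_square_zero_up_to Y n2 m2"
    and m1: "m1 \<le> n1" and m2: "m2 \<le> n2"
  shows "commuting_square_zero_up_to (block_diag X Y) (n1 + n2) (m1 + m2)"
  unfolding commuting_square_zero_up_to_def
proof (intro allI impI)
  fix k assume k: "k \<le> m1 + m2"
  define k1 where "k1 = min k m1"
  define k2 where "k2 = k - k1"
  have k12: "k1 \<le> m1" "k2 \<le> m2" "k = k1 + k2" unfolding k1_def k2_def using k by auto
  from gX k12 obtain B1 where B1: "B1 \<in> carrier_mat n1 n1" and XB: "X * B1 = B1 * X"
    and BB1: "B1 * B1 = 0\<^sub>m n1 n1" and kd1: "kernel.dim n1 B1 = n1 - k1"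
    unfolding commuting_square_zero_up_to_def by blast
  from gY k12 obtain B2 where B2: "B2 \<in> carrier_mat n2 n2" and YB: "Y * B2 = B2 * Y"
    and BB2: "B2 * B2 = 0\<^sub>m n2 n2" and kd2: "kernel.dim n2 B2 = n2 - k2"
    unfolding commuting_square_zero_up_to_def by blast
  define B where "B = four_block_mat B1 (0\<^sub>m n1 n2) (0\<^sub>m n2 n1) B2"
  have XY: "block_diag X Y = four_block_mat X (0\<^sub>m n1 n2) (0\<^sub>m n2 n1) Y" using X Y by simp
  have B: "B \<in> carrier_mat (n1+n2) (n1+n2)" unfolding B_def using B1 B2 by simp
  have "block_diag X Y * B = four_block_mat (X * B1) (0\<^sub>m n1 n2) (0\<^sub>m n2 n1) (Y * B2)"
    unfolding XY B_def by (subst mult_four_block_mat[OF X zero_carrier_mat zero_carrier_mat Y B1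
          zero_carrier_mat zero_carrier_mat B2], insert X Y B1 B2, simp_all)
  moreover have "B * block_diag X Y = four_block_mat (B1 * X) (0\<^sub>m n1 n2) (0\<^sub>m n2 n1) (B2 * Y)"
    unfolding XY B_def by (subst mult_four_block_mat[OF B1 zero_carrier_mat zero_carrier_mat B2 X
          zero_carrier_mat zero_carrier_mat Y], insert X Y B1 B2, simp_all)
  ultimately have comm: "block_diag X Y * B = B * block_diag X Y" unfolding XB YB by simp
  have "B * B = four_block_mat (B1 * B1) (0\<^sub>m n1 n2) (0\<^sub>m n2 n1) (B2 * B2)"
    unfolding B_def by (subst mult_four_block_mat[OF B1 zero_carrier_mat zero_carrier_mat B2 B1
          zero_carrier_mat zero_carrier_mat B2], insert B1 B2, simp_all)
  hence sq: "B * B = 0\<^sub>m (n1+n2) (n1+n2)" unfolding BB1 BB2 by simp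
  have "kernel.dim (n1 + n2) B = kernel.dim n1 B1 + kernel.dim n2 B2"
    by (rule kernel_four_block_0_mat[OF B_def B1 B2])
  hence "kernel.dim (n1 + n2) B = n1 + n2 - k" unfolding kd1 kd2 using k12 m1 m2 by simp
  thus "\<exists>B. B \<in> carrier_mat (n1 + n2) (n1 + n2) \<and> block_diag X Y * B = B * block_diag X Y \<and>
      B * B = 0\<^sub>m (n1 + n2) (n1 + n2) \<and> kernel.dim (n1 + n2) B = n1 + n2 - k"
    using B comm sq by blast
qed

section \<open>Two odd Jordan blocks\<close>

lemma uminus_zero_mat[simp]: "- 0\<^sub>m nr nc = (0\<^sub>m nr nc :: 'a :: group_add mat)"
  by (rule eq_matI, auto)

lemma add_zero_mat_dims[simp]:
  assumes "dim_row A = nr" and "dim_col A = nc"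
  shows "A + 0\<^sub>m nr nc = (A :: 'a :: monoid_add mat)" and "0\<^sub>m nr nc + A = A"
  using assms by (auto intro!: eq_matI)

lemma upper_unitriangular_block_inverse:
  assumes X: "(X :: 'a :: ring_1 mat) \<in> carrier_mat a b"
  shows "four_block_mat (1\<^sub>m a) X (0\<^sub>m b a) (1\<^sub>m b) * four_block_mat (1\<^sub>m a) (- X) (0\<^sub>m b a) (1\<^sub>m b) = 1\<^sub>m (a + b)"
proof -
  have "1\<^sub>m a * (- X) + X * 1\<^sub>m b = 0\<^sub>m a b" using X by (intro eq_matI, auto)
  thus ?thesis using X by (subst mult_four_block_mat, auto)
qed

lemma lower_unitriangular_block_inverse:
  assumes Y: "(Y :: 'a :: ring_1 mat) \<in> carrier_mat b a"
  shows "four_block_mat (1\<^sub>m a) (0\<^sub>m a b) (- Y) (1\<^sub>m b) * four_block_mat (1\<^sub>m a) (0\<^sub>m a b) Y (1\<^sub>m b) = 1\<^sub>m (a + b)"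
proof -
  have "- Y * 1\<^sub>m a + 1\<^sub>m b * Y = 0\<^sub>m b a" using Y by (intro eq_matI, auto)
  thus ?thesis using Y by (subst mult_four_block_mat, auto)
qed

text \<open>For Jordan blocks N_a, N_b with eigenvalue 0 and a = b + 2d, the matrix
    W = [[N_a^d, -E], [F, -N_b^d]]
  (E the a \<times> b matrix with ones on the diagonal, F the b \<times> a matrix with ones on the
  2d-th superdiagonal) commutes with N_a \<oplus> N_b, squares to zero and has nullity b + d, i.e.
  rank (a + b) div 2.  This is one more than the sum of the ranks available for the two blocks
  separately, which is what makes the odd blocks pair up.\<close>

definition pair_witness :: "nat \<Rightarrow> nat \<Rightarrow> nat \<Rightarrow> 'a :: ring_1 mat" where
  "pair_witness a b d = four_block_mat (shift_mat a a d 1) (shift_mat a b 0 (-1))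
     (shift_mat b a (2*d) 1) (shift_mat b b d (-1))"

context
  fixes a b d :: nat
  assumes ab: "a = b + 2 * d"
begin

lemma pair_witness_carrier: "(pair_witness a b d :: 'a :: ring_1 mat) \<in> carrier_mat (a+b) (a+b)"
  unfolding pair_witness_def by simp

lemma pair_witness_commutes:
  "block_diag (jordan_block a 0) (jordan_block b 0) * pair_witness a b d
    = (pair_witness a b d :: 'a :: field mat) * block_diag (jordan_block a 0) (jordan_block b 0)"
proof -
  have eqs: "shift_mat a a 1 1 * shift_mat a a d 1 = shift_mat a a d 1 * shift_mat a a 1 (1 :: 'a)"
    "shift_mat a a 1 1 * shift_mat a b 0 (-1) = shift_mat a b 0 (-1) * shift_mat b b 1 (1 :: 'a)"
    "shift_mat b b 1 1 * shift_mat b a (2*d) 1 = shift_mat b a (2*d) 1 * shift_mat a a 1 (1 :: 'a)"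
    "shift_mat b b 1 1 * shift_mat b b d (-1) = shift_mat b b d (-1) * shift_mat b b 1 (1 :: 'a)"
    unfolding shift_mat_def pattern_mat_mult by (simp_all, (rule pattern_mat_eqI, insert ab, auto)+)
  have "block_diag (shift_mat a a 1 1) (shift_mat b b 1 1) * pair_witness a b d =
    four_block_mat (shift_mat a a 1 1 * shift_mat a a d 1) (shift_mat a a 1 1 * shift_mat a b 0 (-1))
      (shift_mat b b 1 1 * shift_mat b a (2*d) 1) (shift_mat b b 1 1 * shift_mat b b d (-1 :: 'a))"
    unfolding pair_witness_def shift_mat_dims
    by (subst mult_four_block_mat[OF shift_mat_carrier zero_carrier_mat zero_carrier_mat shift_mat_carrier
          shift_mat_carrier shift_mat_carrier shift_mat_carrier shift_mat_carrier], simp)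
  moreover have "pair_witness a b d * block_diag (shift_mat a a 1 1) (shift_mat b b 1 1) =
    four_block_mat (shift_mat a a d 1 * shift_mat a a 1 1) (shift_mat a b 0 (-1) * shift_mat b b 1 1)
      (shift_mat b a (2*d) 1 * shift_mat a a 1 1) (shift_mat b b d (-1) * shift_mat b b 1 (1 :: 'a))"
    unfolding pair_witness_def shift_mat_dims
    by (subst mult_four_block_mat[OF shift_mat_carrier shift_mat_carrier shift_mat_carrier shift_mat_carrier
          shift_mat_carrier zero_carrier_mat zero_carrier_mat shift_mat_carrier], simp)
  ultimately show ?thesis unfolding jordan_block_zero_shift eqs by simp
qed

lemma pair_witness_square_zero: "(pair_witness a b d :: 'a :: ring_1 mat) * pair_witness a b d = 0\<^sub>m (a+b) (a+b)"
proof -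
  have "shift_mat a a d 1 * shift_mat a a d 1 + shift_mat a b 0 (-1) * shift_mat b a (2*d) (1 :: 'a) = 0\<^sub>m a a"
    "shift_mat a a d 1 * shift_mat a b 0 (-1) + shift_mat a b 0 (-1) * shift_mat b b d (-1 :: 'a) = 0\<^sub>m a b"
    "shift_mat b a (2*d) 1 * shift_mat a a d 1 + shift_mat b b d (-1) * shift_mat b a (2*d) (1 :: 'a) = 0\<^sub>m b a"
    "shift_mat b a (2*d) 1 * shift_mat a b 0 (-1) + shift_mat b b d (-1) * shift_mat b b d (-1 :: 'a) = 0\<^sub>m b b"
    unfolding shift_mat_def pattern_mat_mult
    by (simp_all, (rule pattern_mat_add_cancel, insert ab, auto)+)
  thus ?thesis unfolding pair_witness_def by (subst mult_four_block_mat, auto)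
qed

text \<open>Right multiplication by an upper and left multiplication by a lower unitriangular matrix
  clear all blocks except N_a^d, whose nullity is d.\<close>

lemma pair_witness_kernel_dim: "kernel.dim (a+b) (pair_witness a b d :: 'a :: field mat) = b + d"
proof -
  let ?W = "pair_witness a b d :: 'a mat"
  let ?D = "down_shift_mat a b d :: 'a mat" and ?F = "shift_mat b a d (-1) :: 'a mat"
  define U where "U = four_block_mat (1\<^sub>m a) ?D (0\<^sub>m b a) (1\<^sub>m b)"
  define U' where "U' = four_block_mat (1\<^sub>m a) (- ?D) (0\<^sub>m b a) (1\<^sub>m b)"
  define L where "L = four_block_mat (1\<^sub>m a) (0\<^sub>m a b) ?F (1\<^sub>m b)"
  define L' where "L' = four_block_mat (1\<^sub>m a) (0\<^sub>m a b) (- ?F) (1\<^sub>m b)"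
  define C where "C = four_block_mat (shift_mat a a d 1) (0\<^sub>m a b) (shift_mat b a (2*d) 1) (0\<^sub>m b b :: 'a mat)"
  have carr: "U \<in> carrier_mat (a+b) (a+b)" "U' \<in> carrier_mat (a+b) (a+b)" "L \<in> carrier_mat (a+b) (a+b)"
    "L' \<in> carrier_mat (a+b) (a+b)" "C \<in> carrier_mat (a+b) (a+b)"
    unfolding U_def U'_def L_def L'_def C_def by auto
  have "shift_mat a a d 1 * ?D + shift_mat a b 0 (-1) = 0\<^sub>m a b"
    "shift_mat b a (2*d) 1 * ?D + shift_mat b b d (-1) = 0\<^sub>m b b"
    "?F * shift_mat a a d 1 + shift_mat b a (2*d) 1 = 0\<^sub>m b a"
    unfolding shift_mat_def down_shift_mat_def pattern_mat_mult
    by (simp_all, (rule pattern_mat_add_cancel, insert ab, auto)+)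
  hence WU: "?W * U = C" and LC: "L * C = four_block_mat (shift_mat a a d 1) (0\<^sub>m a b) (0\<^sub>m b a) (0\<^sub>m b b)"
    unfolding pair_witness_def U_def L_def C_def by (subst mult_four_block_mat, auto)+
  have "kernel.dim (a+b) ?W = kernel.dim (a+b) C"
    using mat_kernel_dim_mult_eq_right[OF pair_witness_carrier carr(1,2)
        upper_unitriangular_block_inverse[of ?D a b, folded U_def U'_def]] WU by simp
  also have "\<dots> = kernel.dim (a+b) (L * C)"
    using mat_kernel_mult_eq[OF carr(5,3,4) lower_unitriangular_block_inverse[of ?F b a, folded L_def L'_def]]
    by simp
  also have "\<dots> = kernel.dim a (shift_mat a a d (1::'a)) + kernel.dim b (0\<^sub>m b b :: 'a mat)"
    by (rule kernel_four_block_0_mat[OF LC shift_mat_carrier zero_carrier_mat])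
  also have "kernel.dim a (shift_mat a a d (1::'a)) = d"
    using dim_kernel_zero_jordan_block_pow[of a d] ab unfolding jordan_block_zero_pow_shift by simp
  finally show ?thesis using kernel_dim_zero_mat[of b] by simp
qed

lemma commuting_square_zero_odd_pair:
  "commuting_square_zero_up_to (block_diag (jordan_block a (0 :: 'a :: field)) (jordan_block b 0)) (a+b) ((a+b) div 2)"
  unfolding commuting_square_zero_up_to_def
proof (intro allI impI)
  fix k assume k: "k \<le> (a+b) div 2"
  show "\<exists>B. B \<in> carrier_mat (a + b) (a + b) \<and>
      block_diag (jordan_block a 0) (jordan_block b (0::'a)) * B = B * block_diag (jordan_block a 0) (jordan_block b 0) \<and>
      B * B = 0\<^sub>m (a + b) (a + b) \<and> kernel.dim (a + b) B = a + b - k"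
  proof (cases "k = (a+b) div 2")
    case True
    hence "kernel.dim (a+b) (pair_witness a b d :: 'a mat) = a + b - k"
      unfolding pair_witness_kernel_dim using ab by simp
    thus ?thesis using pair_witness_carrier pair_witness_commutes pair_witness_square_zero by blast
  next
    case False
    with k ab have "k \<le> a div 2 + b div 2" by presburger
    moreover have "commuting_square_zero_up_to (block_diag (jordan_block a (0 :: 'a)) (jordan_block b 0))
        (a+b) (a div 2 + b div 2)"
      by (rule commuting_square_zero_block_diag[OF jordan_block_carrier jordan_block_carrier
            commuting_square_zero_jordan_block commuting_square_zero_jordan_block], auto)
    ultimately show ?thesis unfolding commuting_square_zero_up_to_def by blast
  qed
qed

end

lemma commuting_square_zero_two_odd_blocks:
  assumes s: "odd s" and b: "odd b"
  shows "commuting_square_zero_up_to (block_diag (jordan_block s (0 :: 'a :: field)) (jordan_block b 0))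
    (s + b) ((s + b) div 2)"
proof (cases "b \<le> s")
  case True
  hence "s = b + 2 * ((s - b) div 2)" using s b by presburger
  thus ?thesis by (rule commuting_square_zero_odd_pair)
next
  case False
  hence "b = s + 2 * ((b - s) div 2)" using s b by presburger
  from commuting_square_zero_odd_pair[OF this, where 'a='a]
  have g: "commuting_square_zero_up_to (block_diag (jordan_block b (0::'a)) (jordan_block s 0)) (s + b) ((s + b) div 2)"
    by (simp add: add.commute)
  have c: "block_diag (jordan_block b (0::'a)) (jordan_block s 0) \<in> carrier_mat (s + b) (s + b)"
    by (simp add: add.commute)
  show ?thesis
    by (rule commuting_square_zero_similar[OF similar_block_diag_swap[OF jordan_block_carrier jordan_block_carrier] c g])
qed

lemma odd_sum_list_ex: "odd (sum_list (xs :: nat list)) \<Longrightarrow> \<exists>x \<in> set xs. odd x"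
  by (induct xs, auto)

lemma commuting_square_zero_odd_blocks_Cons:
  assumes s: "odd s" and b: "odd b"
    and g: "commuting_square_zero_up_to (jordan_matrix cs) (sum_list (map fst cs)) (sum_list (map fst cs) div 2)"
  shows "commuting_square_zero_up_to (jordan_matrix ((s, 0 :: 'a :: field) # (b, 0) # cs))
    (s + b + sum_list (map fst cs)) ((s + b + sum_list (map fst cs)) div 2)"
proof -
  let ?r = "sum_list (map fst cs)"
  have "commuting_square_zero_up_to (block_diag (block_diag (jordan_block s (0::'a)) (jordan_block b 0))
      (jordan_matrix cs)) (s + b + ?r) ((s + b) div 2 + ?r div 2)"
    by (rule commuting_square_zero_block_diag[OF _ jordan_matrix_carrier
          commuting_square_zero_two_odd_blocks[OF s b] g], auto)
  moreover have "(s + b) div 2 + ?r div 2 = (s + b + ?r) div 2" using s b by presburger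
  moreover have "block_diag (block_diag (jordan_block s (0::'a)) (jordan_block b 0)) (jordan_matrix cs)
      = jordan_matrix ((s,0) # (b,0) # cs)"
    unfolding jordan_matrix_Cons' block_diag_assoc ..
  ultimately show ?thesis by simp
qed

text \<open>A nilpotent Jordan matrix of size n admits every rank up to n div 2.  Induction on the
  number of blocks: split off the first block; if it and the rest both have odd size, pair it
  with another odd block of the rest (after reordering the blocks by a similarity).\<close>

lemma commuting_square_zero_jordan_matrix:
  assumes "\<forall>x \<in> set bs. snd x = (0 :: 'a :: field)"
  shows "commuting_square_zero_up_to (jordan_matrix bs) (sum_list (map fst bs)) (sum_list (map fst bs) div 2)"
  using assms
proof (induct "length bs" arbitrary: bs rule: less_induct)
  case less
  have IH: "commuting_square_zero_up_to (jordan_matrix cs) (sum_list (map fst cs)) (sum_list (map fst cs) div 2)"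
    if "length cs < length bs" "\<forall>x \<in> set cs. snd x = (0 :: 'a)" for cs
    using less(1) that by blast
  show ?case
  proof (cases bs)
    case Nil
    have "jordan_matrix bs = (0\<^sub>m 0 0 :: 'a mat)" unfolding Nil jordan_matrix_def by simp
    thus ?thesis unfolding commuting_square_zero_up_to_def Nil
      using kernel_dim_zero_mat[of 0, where 'a='a] by (intro allI impI exI[of _ "0\<^sub>m 0 0"], auto)
  next
    case (Cons x rest)
    with less(2) obtain s where bs: "bs = (s,0) # rest" by (cases x, auto)
    let ?r = "sum_list (map fst rest)"
    have n: "sum_list (map fst bs) = s + ?r" unfolding bs by simp
    show ?thesis
    proof (cases "even s \<or> even ?r")
      case True
      have "commuting_square_zero_up_to (block_diag (jordan_block s (0::'a)) (jordan_matrix rest))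
          (s + ?r) (s div 2 + ?r div 2)"
        by (rule commuting_square_zero_block_diag[OF jordan_block_carrier jordan_matrix_carrier
              commuting_square_zero_jordan_block IH], insert less(2) bs, auto)
      moreover have "s div 2 + ?r div 2 = (s + ?r) div 2" using True by presburger
      ultimately show ?thesis unfolding n bs jordan_matrix_Cons' by simp
    next
      case False
      from odd_sum_list_ex[of "map fst rest"] False obtain b where "(b, 0) \<in> set rest" "odd b"
        using less(2) bs by fastforce
      from split_list[OF this(1)] obtain ys zs where rest: "rest = ys @ (b,0) # zs" by blast
      have r: "?r = b + sum_list (map fst (ys @ zs))" unfolding rest by simp
      have "odd s" using False by simp
      moreover have "commuting_square_zero_up_to (jordan_matrix (ys @ zs)) (sum_list (map fst (ys @ zs)))
          (sum_list (map fst (ys @ zs)) div 2)"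
        by (rule IH, insert less(2) bs rest, auto)
      ultimately have "commuting_square_zero_up_to (jordan_matrix ((s,0) # (b,0) # ys @ zs))
          (s + b + sum_list (map fst (ys @ zs))) ((s + b + sum_list (map fst (ys @ zs))) div 2)"
        by (rule commuting_square_zero_odd_blocks_Cons[OF _ \<open>odd b\<close>])
      hence g: "commuting_square_zero_up_to (jordan_matrix ((s,0) # (b,0) # ys @ zs)) (s + ?r) ((s + ?r) div 2)"
        unfolding r by (simp only: add.assoc)
      have sim: "similar_mat (jordan_matrix bs) (jordan_matrix ((s,0) # (b,0) # ys @ zs))"
        by (rule similar_jordan_mset, simp add: bs rest)
      have "jordan_matrix ((s,0) # (b,0) # ys @ zs) \<in> carrier_mat (s + ?r) (s + ?r)"
        using jordan_matrix_carrier[of "(s,0) # (b,0) # ys @ zs"] r by (simp add: add.assoc)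
      from commuting_square_zero_similar[OF sim this g] show ?thesis unfolding n .
    qed
  qed
qed

lemma nilpotent_commuting_square_zero:
  assumes A: "(A :: 'a :: field mat) \<in> carrier_mat n n" and nil: "nilpotent_mat A" and k: "2 * k \<le> n"
  shows "\<exists>B. B \<in> carrier_mat n n \<and> A * B = B * A \<and> B * B = 0\<^sub>m n n \<and> vec_space.rank n B = k"
proof -
  from nil A obtain m where "A ^\<^sub>m m = 0\<^sub>m n n" unfolding nilpotent_mat_def by auto
  from nilpotent_jordan[OF A this] obtain bs where sim: "similar_mat A (jordan_matrix bs)"
    and bs: "\<forall>x \<in> set bs. snd x = 0 \<and> fst x > 0" and sn: "sum_list (map fst bs) = n" by blast
  have "commuting_square_zero_up_to (jordan_matrix bs) n (n div 2)"
    using commuting_square_zero_jordan_matrix[of bs] bs unfolding sn by auto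
  from commuting_square_zero_similar[OF sim _ this] jordan_matrix_carrier[of bs]
  have g: "commuting_square_zero_up_to A n (n div 2)" unfolding sn by simp
  have "k \<le> n div 2" using k by linarith
  from g[unfolded commuting_square_zero_up_to_def, rule_format, OF this] obtain B where
    "B \<in> carrier_mat n n" "A * B = B * A" "B * B = 0\<^sub>m n n" "kernel.dim n B = n - k" by blast
  moreover from this(1,4) have "vec_space.rank n B = k" using rank_plus_kernel_dim[of B n] k by simp
  ultimately show ?thesis by blast
qed

lemma nilpotent_pair_conjugate_square_zero:
  assumes A: "(A :: 'a :: field mat) \<in> carrier_mat n n" and B: "B \<in> carrier_mat n n"
    and nilA: "nilpotent_mat A" and nilB: "nilpotent_mat B" and k: "2 * k \<le> n"
  shows "\<exists>C P Pinv. C \<in> carrier_mat n n \<and> C * C = 0\<^sub>m n n \<and> vec_space.rank n C = k \<and>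
    P \<in> carrier_mat n n \<and> Pinv \<in> carrier_mat n n \<and> P * Pinv = 1\<^sub>m n \<and> Pinv * P = 1\<^sub>m n \<and>
    A * C = C * A \<and> (P * C * Pinv) * B = B * (P * C * Pinv)"
proof -
  from nilpotent_commuting_square_zero[OF A nilA k] obtain C where C: "C \<in> carrier_mat n n"
    and AC: "A * C = C * A" and CC: "C * C = 0\<^sub>m n n" and rkC: "vec_space.rank n C = k" by blast
  from nilpotent_commuting_square_zero[OF B nilB k] obtain D where D: "D \<in> carrier_mat n n"
    and BD: "B * D = D * B" and DD: "D * D = 0\<^sub>m n n" and rkD: "vec_space.rank n D = k" by blast
  have "kernel.dim n D = kernel.dim n C"
    using rank_plus_kernel_dim[OF C] rank_plus_kernel_dim[OF D] rkC rkD by simp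
  from square_zero_similar[OF D DD C CC this] obtain P Q where "similar_mat_wit D C P Q"
    unfolding similar_mat_def by blast
  from similar_mat_witD2[OF D this] have "P \<in> carrier_mat n n" "Q \<in> carrier_mat n n"
    "P * Q = 1\<^sub>m n" "Q * P = 1\<^sub>m n" "D = P * C * Q" by auto
  thus ?thesis using C CC rkC AC BD by (intro exI[of _ C] exI[of _ P] exI[of _ Q]) auto
qed

theorem corollary2p5:
  fixes n :: nat
  shows
   "(\<forall>(A :: 'a :: {alg_closed_field, field_char_0} mat) k.
        A \<in> carrier_mat n n \<longrightarrow> nilpotent_mat A \<longrightarrow> 2 * k \<le> n \<longrightarrow>
        (\<exists>B. B \<in> carrier_mat n n \<and> A * B = B * A \<and> B * B = 0\<^sub>m n n \<and>
             vec_space.rank n B = k))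
    \<and>
    (\<forall>(A :: 'a mat) B k.
        A \<in> carrier_mat n n \<longrightarrow> B \<in> carrier_mat n n \<longrightarrow>
        nilpotent_mat A \<longrightarrow> nilpotent_mat B \<longrightarrow> 2 * k \<le> n \<longrightarrow>
        (\<exists>C P Pinv. C \<in> carrier_mat n n \<and> C * C = 0\<^sub>m n n \<and> vec_space.rank n C = k \<and>
             P \<in> carrier_mat n n \<and> Pinv \<in> carrier_mat n n \<and>
             P * Pinv = 1\<^sub>m n \<and> Pinv * P = 1\<^sub>m n \<and>
             A * C = C * A \<and> (P * C * Pinv) * B = B * (P * C * Pinv)))"
  by (intro conjI allI impI nilpotent_commuting_square_zero nilpotent_pair_conjugate_square_zero; assumption)

end
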